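(* Let $A=(a_{n,k})$ be a real matrix with $a_{n,k}\ge0$ and $\sum_{k=0}^\infty a_{n,k}=1$ for every $n$, let $r\in\mathbb{N}$, $n\ge0$, and let $t\in\mathbb{R}$ with $t\neq\frac{2l\pi}{r}$ for all $l\in\mathbb{Z}$. Then $$\left|\sum_{k=0}^{\infty}a_{n,k}\widetilde{D^{\circ}}_{k,1}(t)\right|\le\frac{1}{2\left|\sin\frac t2\sin\frac{rt}2\right|}\left(A_{n,r}+\sum_{k=0}^{r-1}a_{n,k}\right)\le\frac{1}{\left|\sin\frac t2\sin\frac{rt}2\right|}A_{n,r}.$$
   Context: $\widetilde{D^{\circ}}_{k,1}(t)=\dfrac{\cos\frac{(2k+1)t}{2}}{2\sin\frac t2}$ and $A_{n,r}=\sum_{k=0}^\infty|a_{n,k}-a_{n,k+r}|$. *)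

theory Defs
  imports Complex_Main
begin

definition Dconj :: "nat \<Rightarrow> real \<Rightarrow> real" where
  "Dconj k t = cos ((2 * real k + 1) * t / 2) / (2 * sin (t / 2))"

definition Anr :: "(nat \<Rightarrow> nat \<Rightarrow> real) \<Rightarrow> nat \<Rightarrow> nat \<Rightarrow> real" where
  "Anr a n r = (\<Sum>k. \<bar>a n k - a n (k + r)\<bar>)"

end

theory Submission
  imports Defs
begin

text \<open>Multiplying the kernel by \<open>4 sin (t/2) sin (r t/2)\<close> turns it into a difference
  \<open>g (k + r) - g k\<close> of bounded terms \<open>g k = sin ((2k + 1 - r) t / 2)\<close>. Summation by parts
  against the row then moves the shift onto the coefficients, bounding the series by
  \<open>A\<^sub>n\<^sub>,\<^sub>r\<close> plus the first \<open>r\<close> coefficients; the latter are themselves bounded by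
  \<open>A\<^sub>n\<^sub>,\<^sub>r\<close>, being the limit of the telescoping partial sums of \<open>a\<^sub>n\<^sub>,\<^sub>k - a\<^sub>n\<^sub>,\<^sub>k\<^sub>+\<^sub>r\<close>.\<close>

lemma sum_lessThan_diff_shift:
  fixes b :: "nat \<Rightarrow> 'a::ab_group_add"
  shows "(\<Sum>k<N. b k - b (k + r)) = (\<Sum>k<r. b k) - (\<Sum>k<r. b (N + k))"
proof -
  have split: "(\<Sum>k<m + l. b k) = (\<Sum>k<m. b k) + (\<Sum>k<l. b (m + k))" for m l
    by (induction l) (simp_all add: add.assoc)
  have "(\<Sum>k<N. b k) + (\<Sum>k<r. b (N + k)) = (\<Sum>k<r. b k) + (\<Sum>k<N. b (r + k))"
    using split[of N r] split[of r N] by (simp add: add.commute)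
  then show ?thesis
    by (simp add: sum_subtractf algebra_simps)
qed

lemma summable_abs_diff_shift:
  fixes b :: "nat \<Rightarrow> real"
  assumes "summable (\<lambda>k. \<bar>b k\<bar>)"
  shows "summable (\<lambda>k. \<bar>b k - b (k + r)\<bar>)"
proof (rule summable_comparison_test)
  show "summable (\<lambda>k. \<bar>b k\<bar> + \<bar>b (k + r)\<bar>)"
    using assms summable_ignore_initial_segment[OF assms, of r] by (rule summable_add)
qed auto

lemma sum_lessThan_le_suminf_abs_diff_shift:
  fixes b :: "nat \<Rightarrow> real"
  assumes sb: "summable (\<lambda>k. \<bar>b k\<bar>)"
  shows "(\<Sum>k<r. b k) \<le> (\<Sum>k. \<bar>b k - b (k + r)\<bar>)"
proof (rule LIMSEQ_le)
  have "b \<longlonglongrightarrow> 0"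
    using summable_LIMSEQ_zero[OF summable_rabs_cancel[OF sb]] .
  then have tail: "(\<lambda>N. \<Sum>k<r. b (N + k)) \<longlonglongrightarrow> 0"
    by (intro tendsto_null_sum) (use LIMSEQ_ignore_initial_segment in \<open>simp add: add.commute\<close>)
  show "(\<lambda>N. (\<Sum>k<N. b k - b (k + r)) + (\<Sum>k<r. b (N + k))) \<longlonglongrightarrow> (\<Sum>k<r. b k)"
    by (simp add: sum_lessThan_diff_shift)
  show "(\<lambda>N. (\<Sum>k<N. \<bar>b k - b (k + r)\<bar>) + (\<Sum>k<r. b (N + k)))
      \<longlonglongrightarrow> (\<Sum>k. \<bar>b k - b (k + r)\<bar>)"
    using tendsto_add[OF summable_LIMSEQ[OF summable_abs_diff_shift[OF sb]] tail] by simp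
  show "\<exists>N. \<forall>n\<ge>N. (\<Sum>k<n. b k - b (k + r)) + (\<Sum>k<r. b (n + k))
      \<le> (\<Sum>k<n. \<bar>b k - b (k + r)\<bar>) + (\<Sum>k<r. b (n + k))"
    by (auto intro!: sum_mono)
qed

lemma summable_mult_bounded:
  fixes b g :: "nat \<Rightarrow> real"
  assumes "summable (\<lambda>k. \<bar>b k\<bar>)" and "\<And>k. \<bar>g k\<bar> \<le> M"
  shows "summable (\<lambda>k. \<bar>b k * g k\<bar>)"
proof (rule summable_comparison_test)
  show "summable (\<lambda>k. \<bar>b k\<bar> * M)"
    using assms(1) by (rule summable_mult2)
  show "\<exists>N. \<forall>k\<ge>N. norm \<bar>b k * g k\<bar> \<le> \<bar>b k\<bar> * M"
    using assms(2) by (intro exI[of _ 0] allI impI) (simp add: abs_mult mult_left_mono)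
qed

lemma suminf_mult_shift_diff:
  fixes b g :: "nat \<Rightarrow> real"
  assumes sb: "summable (\<lambda>k. \<bar>b k\<bar>)" and gM: "\<And>k. \<bar>g k\<bar> \<le> M"
  shows "(\<Sum>k. b k * (g (k + r) - g k))
    = (\<Sum>k. (b k - b (k + r)) * g (k + r)) - (\<Sum>k<r. b k * g k)"
proof -
  have sg: "summable (\<lambda>k. b k * g k)"
    using summable_rabs_cancel[OF summable_mult_bounded[OF sb gM]] .
  have sgr: "summable (\<lambda>k. b k * g (k + r))"
    using summable_rabs_cancel[OF summable_mult_bounded[OF sb gM]] .
  have sgrr: "summable (\<lambda>k. b (k + r) * g (k + r))"
    using summable_ignore_initial_segment[OF sg, of r] by simp
  have "(\<Sum>k. b k * (g (k + r) - g k)) = (\<Sum>k. b k * g (k + r)) - (\<Sum>k. b k * g k)"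
    using suminf_diff[OF sgr sg] by (simp add: right_diff_distrib)
  also have "(\<Sum>k. b k * g k) = (\<Sum>k. b (k + r) * g (k + r)) + (\<Sum>k<r. b k * g k)"
    using suminf_split_initial_segment[OF sg, of r] by simp
  also have "(\<Sum>k. b k * g (k + r)) - ((\<Sum>k. b (k + r) * g (k + r)) + (\<Sum>k<r. b k * g k))
      = (\<Sum>k. (b k - b (k + r)) * g (k + r)) - (\<Sum>k<r. b k * g k)"
    using suminf_diff[OF sgr sgrr] by (simp add: left_diff_distrib)
  finally show ?thesis .
qed

lemma abs_suminf_mult_shift_diff_le:
  fixes b g :: "nat \<Rightarrow> real"
  assumes sb: "summable (\<lambda>k. \<bar>b k\<bar>)" and g1: "\<And>k. \<bar>g k\<bar> \<le> 1"
  shows "\<bar>\<Sum>k. b k * (g (k + r) - g k)\<bar>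
    \<le> (\<Sum>k. \<bar>b k - b (k + r)\<bar>) + (\<Sum>k<r. \<bar>b k\<bar>)"
proof -
  have sd: "summable (\<lambda>k. \<bar>b k - b (k + r)\<bar>)"
    using sb by (rule summable_abs_diff_shift)
  have sn: "summable (\<lambda>k. \<bar>(b k - b (k + r)) * g (k + r)\<bar>)"
    using summable_mult_bounded[OF sd, of "\<lambda>k. g (k + r)" 1] g1 by simp
  have "\<bar>\<Sum>k. (b k - b (k + r)) * g (k + r)\<bar> \<le> (\<Sum>k. \<bar>(b k - b (k + r)) * g (k + r)\<bar>)"
    using summable_rabs[OF sn] .
  also have "\<dots> \<le> (\<Sum>k. \<bar>b k - b (k + r)\<bar>)"
    using sn sd g1 by (intro suminf_le) (auto simp: abs_mult intro: mult_left_le)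
  finally have tail: "\<bar>\<Sum>k. (b k - b (k + r)) * g (k + r)\<bar> \<le> (\<Sum>k. \<bar>b k - b (k + r)\<bar>)" .
  have head: "\<bar>\<Sum>k<r. b k * g k\<bar> \<le> (\<Sum>k<r. \<bar>b k\<bar>)"
    using g1 by (intro order_trans[OF sum_abs] sum_mono) (auto simp: abs_mult intro: mult_left_le)
  show ?thesis
    using suminf_mult_shift_diff[where g = g and r = r, OF sb g1] tail head by linarith
qed

lemma sin_shift_diff_eq:
  fixes t :: real and r :: nat
  defines "g \<equiv> \<lambda>k::nat. sin ((2 * real k + 1 - real r) * t / 2)"
  shows "g (k + r) - g k = 2 * sin (real r * t / 2) * cos ((2 * real k + 1) * t / 2)"
proof -
  have "g (k + r) - g k = 2 * sin (((2 * real (k + r) + 1 - real r) * t / 2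
      - (2 * real k + 1 - real r) * t / 2) / 2) * cos (((2 * real (k + r) + 1 - real r) * t / 2
      + (2 * real k + 1 - real r) * t / 2) / 2)"
    unfolding g_def by (rule sin_diff_sin)
  also have "\<dots> = 2 * sin (real r * t / 2) * cos ((2 * real k + 1) * t / 2)"
  proof -
    have half_diff: "((2 * real (k + r) + 1 - real r) * t / 2 - (2 * real k + 1 - real r) * t / 2) / 2
        = real r * t / 2"
      and half_sum: "((2 * real (k + r) + 1 - real r) * t / 2 + (2 * real k + 1 - real r) * t / 2) / 2
        = (2 * real k + 1) * t / 2"
      by (simp_all add: field_simps)
    show ?thesis unfolding half_diff half_sum ..
  qed
  finally show ?thesis .
qed

lemma sin_mult_half_neq_zero:
  fixes t :: real
  assumes "r \<ge> 1" and "\<forall>l::int. t \<noteq> 2 * real_of_int l * pi / real r"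
  shows "sin (real r * t / 2) \<noteq> 0"
proof
  assume "sin (real r * t / 2) = 0"
  then obtain l :: int where "real r * t / 2 = of_int l * pi"
    by (auto simp: sin_zero_iff_int2)
  then have "t = 2 * real_of_int l * pi / real r"
    using assms(1) by (simp add: field_simps)
  then show False using assms(2) by blast
qed

lemma sin_half_neq_zero_of_sin_mult_half:
  fixes t :: real
  assumes "sin (real r * t / 2) \<noteq> 0"
  shows "sin (t / 2) \<noteq> 0"
proof
  assume "sin (t / 2) = 0"
  then obtain l :: int where "t / 2 = of_int l * pi"
    by (auto simp: sin_zero_iff_int2)
  then have "real r * t / 2 = of_int (int r * l) * pi"
    by (simp add: field_simps)
  then show False using assms by (metis sin_zero_iff_int2)
qed

theorem lemma5:
  fixes a :: "nat \<Rightarrow> nat \<Rightarrow> real" and r n :: nat and t :: real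
  assumes nonneg: "\<And>n k. a n k \<ge> 0"
    and rowsum: "\<And>n. a n sums 1"
    and r_pos: "r \<ge> 1"
    and t_ok: "\<forall>l::int. t \<noteq> 2 * real_of_int l * pi / real r"
  shows "(\<bar>\<Sum>k. a n k * Dconj k t\<bar>
           \<le> 1 / (2 * \<bar>sin (t / 2) * sin (real r * t / 2)\<bar>) * (Anr a n r + (\<Sum>k<r. a n k))) \<and>
         (1 / (2 * \<bar>sin (t / 2) * sin (real r * t / 2)\<bar>) * (Anr a n r + (\<Sum>k<r. a n k))
           \<le> 1 / \<bar>sin (t / 2) * sin (real r * t / 2)\<bar> * Anr a n r)"
proof -
  define g where "g = (\<lambda>k::nat. sin ((2 * real k + 1 - real r) * t / 2))"
  define d where "d = 4 * sin (t / 2) * sin (real r * t / 2)"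
  have "sin (real r * t / 2) \<noteq> 0"
    using r_pos t_ok by (rule sin_mult_half_neq_zero)
  then have d0: "d \<noteq> 0"
    by (simp add: d_def sin_half_neq_zero_of_sin_mult_half)
  have sb: "summable (\<lambda>k. \<bar>a n k\<bar>)"
    using rowsum[of n] nonneg by (simp add: sums_iff)
  have g_bound: "\<bar>g k\<bar> \<le> 1" for k
    by (simp add: g_def)
  have g_diff_bound: "\<bar>g (k + r) - g k\<bar> \<le> 2" for k
    using abs_triangle_ineq4[of "g (k + r)" "g k"] g_bound[of k] g_bound[of "k + r"] by linarith
  have kernel: "Dconj k t = (g (k + r) - g k) / d" for k
    using d0 unfolding g_def d_def Dconj_def sin_shift_diff_eq by (simp add: field_simps)
  have "(\<Sum>k. a n k * Dconj k t) = (\<Sum>k. a n k * (g (k + r) - g k)) / d"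
    unfolding kernel times_divide_eq_right
    by (intro suminf_divide summable_rabs_cancel[OF summable_mult_bounded[OF sb g_diff_bound]])
  moreover have "\<bar>\<Sum>k. a n k * (g (k + r) - g k)\<bar> \<le> Anr a n r + (\<Sum>k<r. a n k)"
    using abs_suminf_mult_shift_diff_le[where g = g and r = r, OF sb g_bound] nonneg
    by (simp add: Anr_def)
  moreover have "(\<Sum>k<r. a n k) \<le> Anr a n r"
    unfolding Anr_def using sb by (rule sum_lessThan_le_suminf_abs_diff_shift)
  moreover have "0 \<le> (\<Sum>k<r. a n k)"
    using nonneg by (simp add: sum_nonneg)
  ultimately show ?thesis
    using d0 by (auto simp: d_def abs_mult field_simps)
qed

end
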